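(* Let $\mathbf{X}$ be $\mathbb{R}P^n$ with $G_{\mathbf{X}} = \mathrm{PGL}(n+1,\mathbb{R})$ ($n\ge 2$), or $\mathrm{Ein}^{p,q}$ with $G_{\mathbf{X}}=\mathrm{PO}(p+1,q+1)$ ($\min(p,q)\ge 2$), and fix a Riemannian metric on $\mathbf{X}$. Let $(g_k)$ be a sequence in $G_{\mathbf{X}}$, $(T_k)$ a sequence of positive numbers with $T_k\to\infty$, and $x \in \mathbf{X}$ such that: (1) for every sequence $x_k\rightarrow x$, we have $g_k x_k \rightarrow x$; (2) for every non-zero $v \in T_{x}\mathbf{X}$, $\frac{1}{T_k} \log \|D_{x}g_k v\| \rightarrow -1$. Then, up to passing to a subsequence, there exists an open set $W_{\max} \ni x$ which is an affine chart domain (the complement of a projective hyperplane) if $\mathbf{X} = \mathbb{R}P^n$, or a Minkowski patch if $\mathbf{X} = \mathrm{Ein}^{p,q}$, such that for every compact subset $K \subset W_{\max}$, $g_kK \rightarrow \{x\}$ for the Hausdorff topology.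
   Context: $\mathrm{Ein}^{p,q}$ is the set of isotropic lines of $\mathbb{R}^{p+1,q+1}$ with the induced conformal structure; a Minkowski patch of $\mathrm{Ein}^{p,q}$ is $M_y=\{[w]:B(v,w)\neq0\}$ for an isotropic vector $v$, $y=[v]$, where $B$ is the bilinear form of signature $(p+1,q+1)$. *)

theory Defs
  imports "HOL-Analysis.Analysis"
begin

text \<open>Points of RP^(N-1) (and of Ein, a subset of it) are represented by non-zero
  vectors of real^'n, N = CARD('n); [u] = [c u] for c nonzero.  The fixed
  Riemannian metric is the round (Fubini-Study) metric, i.e. the one making the
  double cover S^(N-1) -> RP^(N-1) a local isometry.\<close>

text \<open>Riemannian distance of the round metric between the lines [u] and [v].\<close>
definition pangle :: "real^'n \<Rightarrow> real^'n \<Rightarrow> real" where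
  "pangle u v = arccos (\<bar>u \<bullet> v\<bar> / (norm u * norm v))"

text \<open>Action of a matrix on the unit sphere (lift of the projective action).\<close>
definition sph_act :: "real^'n^'n \<Rightarrow> real^'n \<Rightarrow> real^'n" where
  "sph_act A w = (1 / norm (A *v w)) *\<^sub>R (A *v w)"

text \<open>Norm of D_x g v for the round metric; x a unit representative, v in T_x.\<close>
definition dnorm :: "real^'n^'n \<Rightarrow> real^'n \<Rightarrow> real^'n \<Rightarrow> real" where
  "dnorm A x v = norm (frechet_derivative (sph_act A) (at x) v)"

definition RP_space :: "(real^'n) set" where
  "RP_space = {w. w \<noteq> 0}"

definition PGL_lifts :: "(real^'n^'n) set" where
  "PGL_lifts = {A. invertible A}"

text \<open>Tangent space at the point represented by the unit vector x.\<close>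
definition RP_tangent :: "real^'n \<Rightarrow> (real^'n) set" where
  "RP_tangent x = {v. v \<bullet> x = 0}"

definition affine_charts :: "(real^'n) set set" where
  "affine_charts = {{w. w \<noteq> 0 \<and> \<phi> \<bullet> w \<noteq> 0} | \<phi>. \<phi> \<noteq> 0}"

definition signform :: "('n \<Rightarrow> real) \<Rightarrow> real^'n \<Rightarrow> real^'n \<Rightarrow> real" where
  "signform s u v = (\<Sum>i\<in>UNIV. s i * (u $ i) * (v $ i))"

definition Ein_space :: "('n \<Rightarrow> real) \<Rightarrow> (real^'n) set" where
  "Ein_space s = {w. w \<noteq> 0 \<and> signform s w w = 0}"

definition O_lifts :: "('n \<Rightarrow> real) \<Rightarrow> (real^'n^'n) set" where
  "O_lifts s = {A. invertible A \<and>
     (\<forall>v w. signform s (A *v v) (A *v w) = signform s v w)}"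

definition Ein_tangent :: "('n \<Rightarrow> real) \<Rightarrow> real^'n \<Rightarrow> (real^'n) set" where
  "Ein_tangent s x = {v. v \<bullet> x = 0 \<and> signform s x v = 0}"

definition Minkowski_patches :: "('n \<Rightarrow> real) \<Rightarrow> (real^'n) set set" where
  "Minkowski_patches s =
     {{w \<in> Ein_space s. signform s v w \<noteq> 0} | v. v \<in> Ein_space s}"

end

theory Submission
  imports Defs
begin

text \<open>For a matrix A with A x \<noteq> 0 write A w = |A x| ((c \<bullet> w) u + R w), where u is the unit vector
  along A x, c is a covector with c \<bullet> x = 1, and R is linear with R x = 0 and R w \<bottom> u; R is the
  derivative at x of the induced map on the sphere. Condition (2) forces R_k \<rightarrow> 0 on tangent
  vectors, hence on all vectors; for Ein this needs |g_k x| \<rightarrow> \<infinity> first, which holds because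
  g_k preserves the form B. Condition (1) forces u_k \<rightarrow> \<plusminus>x and keeps the c_k bounded: otherwise
  there are points y_k \<rightarrow> x of X with c_k \<bullet> y_k = 0, and g_k maps them orthogonally to u_k.
  Along a subsequence c_k \<rightarrow> c_0, and g_k contracts every compact subset of {w. c_0 \<bullet> w \<noteq> 0}
  to x. This set is an affine chart; on Ein, c_0 = J v_0 with v_0 isotropic (J = diag_mult s, the Gram matrix of B),
  and the set cuts out the Minkowski patch of [v_0].\<close>

section \<open>Decomposition of a linear map at a point\<close>

definition stretch :: "real^'n^'n \<Rightarrow> real^'n \<Rightarrow> real" where
  "stretch A x = norm (A *v x)"

definition image_dir :: "real^'n^'n \<Rightarrow> real^'n \<Rightarrow> real^'n" where
  "image_dir A x = (1 / stretch A x) *\<^sub>R (A *v x)"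

definition dual_covec :: "real^'n^'n \<Rightarrow> real^'n \<Rightarrow> real^'n" where
  "dual_covec A x = (1 / stretch A x) *\<^sub>R (transpose A *v image_dir A x)"

definition resid :: "real^'n^'n \<Rightarrow> real^'n \<Rightarrow> real^'n \<Rightarrow> real^'n" where
  "resid A x w = (1 / stretch A x) *\<^sub>R (A *v w) - (dual_covec A x \<bullet> w) *\<^sub>R image_dir A x"

lemma stretch_pos: "A *v x \<noteq> 0 \<Longrightarrow> 0 < stretch A x"
  by (simp add: stretch_def)

lemma norm_image_dir: "A *v x \<noteq> 0 \<Longrightarrow> norm (image_dir A x) = 1"
  by (simp add: image_dir_def stretch_def)

lemma matrix_vector_mult_image_dir: "A *v x = stretch A x *\<^sub>R image_dir A x"
  by (cases "A *v x = 0") (simp_all add: image_dir_def stretch_def)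

lemma inner_transpose_mult:
  fixes A :: "real^'n^'m"
  shows "(transpose A *v a) \<bullet> b = a \<bullet> (A *v b)"
  by (metis dot_lmul_matrix transpose_transpose vector_transpose_matrix)

lemma dual_covec_inner: "dual_covec A x \<bullet> w = image_dir A x \<bullet> (A *v w) / stretch A x"
  unfolding dual_covec_def inner_scaleR_left inner_transpose_mult by simp

lemma dual_covec_inner_self: "A *v x \<noteq> 0 \<Longrightarrow> dual_covec A x \<bullet> x = 1"
  by (simp add: dual_covec_inner image_dir_def stretch_def dot_square_norm power2_eq_square)

lemma matrix_vector_mult_decomp:
  "A *v x \<noteq> 0 \<Longrightarrow> A *v w = stretch A x *\<^sub>R ((dual_covec A x \<bullet> w) *\<^sub>R image_dir A x + resid A x w)"
  using stretch_pos[of A x] by (simp add: resid_def)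

lemma image_dir_inner_resid: "A *v x \<noteq> 0 \<Longrightarrow> image_dir A x \<bullet> resid A x w = 0"
  by (simp add: resid_def dual_covec_inner inner_diff_right dot_square_norm norm_image_dir)

lemma resid_self: "A *v x \<noteq> 0 \<Longrightarrow> resid A x x = 0"
  by (simp add: resid_def dual_covec_inner_self image_dir_def)

lemma linear_resid: "linear (resid A x)"
  by (rule linearI)
    (simp_all add: resid_def matrix_vector_right_distrib matrix_vector_mult_scaleR
      inner_add_right algebra_simps)

lemma has_derivative_sph_act:
  assumes nz: "A *v x \<noteq> 0"
  shows "(sph_act A has_derivative resid A x) (at x)"
proof -
  have lin: "((\<lambda>w. A *v w) has_derivative (\<lambda>v. A *v v)) (at x)"
    by (simp add: bounded_linear_imp_has_derivative matrix_vector_mult_linear_continuous_at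
        bounded_linearI' matrix_vector_right_distrib matrix_vector_mult_scaleR)
  have "((\<lambda>w. norm (A *v w)) has_derivative (\<lambda>v. (A *v v) \<bullet> sgn (A *v x))) (at x)"
    using has_derivative_compose[OF lin has_derivative_norm[OF nz]] by (simp add: o_def)
  from Deriv.has_derivative_inverse[OF _ this] nz
  have "((\<lambda>w. inverse (norm (A *v w))) has_derivative
       (\<lambda>v. - (inverse (norm (A *v x)) * ((A *v v) \<bullet> sgn (A *v x)) * inverse (norm (A *v x))))) (at x)"
    by simp
  from has_derivative_scaleR[OF this lin]
  have "((\<lambda>w. inverse (norm (A *v w)) *\<^sub>R (A *v w)) has_derivative
     (\<lambda>v. inverse (norm (A *v x)) *\<^sub>R (A *v v)
        - (inverse (norm (A *v x)) * ((A *v v) \<bullet> sgn (A *v x)) * inverse (norm (A *v x))) *\<^sub>R (A *v x))) (at x)"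
    by simp
  moreover have "sph_act A = (\<lambda>w. inverse (norm (A *v w)) *\<^sub>R (A *v w))"
    by (simp add: sph_act_def fun_eq_iff divide_inverse)
  moreover have "resid A x = (\<lambda>v. inverse (norm (A *v x)) *\<^sub>R (A *v v)
        - (inverse (norm (A *v x)) * ((A *v v) \<bullet> sgn (A *v x)) * inverse (norm (A *v x))) *\<^sub>R (A *v x))"
    unfolding fun_eq_iff resid_def dual_covec_inner
    by (simp add: image_dir_def stretch_def sgn_div_norm divide_inverse inner_commute)
  ultimately show ?thesis by simp
qed

lemma dnorm_eq_norm_resid: "A *v x \<noteq> 0 \<Longrightarrow> dnorm A x v = norm (resid A x v)"
  by (simp add: dnorm_def frechet_derivative_at[OF has_derivative_sph_act, symmetric])

lemma invertible_mult_vec_nonzero: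
  fixes A :: "real^'n^'n"
  assumes "invertible A" "w \<noteq> 0"
  shows "A *v w \<noteq> 0"
proof
  assume "A *v w = 0"
  obtain B where "B ** A = mat 1"
    using assms(1) by (metis invertible_left_inverse)
  then have "w = B *v (A *v w)"
    by (simp add: matrix_vector_mul_assoc)
  with \<open>A *v w = 0\<close> \<open>w \<noteq> 0\<close> show False
    by simp
qed

definition pcos :: "real^'n \<Rightarrow> real^'n \<Rightarrow> real" where
  "pcos y x = \<bar>y \<bullet> x\<bar> / (norm y * norm x)"

lemma pangle_eq_arccos_pcos: "pangle y x = arccos (pcos y x)"
  by (simp add: pangle_def pcos_def)

lemma pcos_nonneg: "0 \<le> pcos y x"
  by (simp add: pcos_def)

lemma pcos_le_one: "pcos y x \<le> 1"
  using Cauchy_Schwarz_ineq2[of y x] by (cases "y = 0 \<or> x = 0") (auto simp: pcos_def divide_le_eq_1)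

lemma cos_pangle: "cos (pangle y x) = pcos y x"
  using pcos_nonneg[of y x] pcos_le_one[of y x] by (simp add: pangle_eq_arccos_pcos)

lemma pangle_nonneg: "0 \<le> pangle y x"
  using pcos_nonneg[of y x] pcos_le_one[of y x] by (simp add: pangle_eq_arccos_pcos arccos_lbound)

lemma pangle_self: "x \<noteq> 0 \<Longrightarrow> pangle x x = 0"
  by (simp add: pangle_def dot_square_norm power2_eq_square)

lemma pcos_scaleR: "t \<noteq> 0 \<Longrightarrow> pcos (t *\<^sub>R y) x = pcos y x"
  by (simp add: pcos_def abs_mult)

lemma pangle_scaleR: "t \<noteq> 0 \<Longrightarrow> pangle (t *\<^sub>R y) x = pangle y x"
  by (simp add: pangle_def abs_mult)

lemma pcos_tendsto_one:
  assumes "(\<lambda>k. pangle (f k) x) \<longlonglongrightarrow> 0"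
  shows "(\<lambda>k. pcos (f k) x) \<longlonglongrightarrow> 1"
  using tendsto_cos[OF assms] by (simp add: cos_pangle)

lemma pangle_less_if_pcos_gt:
  assumes "0 < \<epsilon>"
  obtains \<theta> where "0 < \<theta>" "\<And>y. 1 - \<theta> < pcos y x \<Longrightarrow> pangle y x < \<epsilon>"
proof -
  define e where "e = min \<epsilon> 1"
  have e: "0 < e" "e \<le> \<epsilon>" "e \<le> pi"
    using assms pi_gt3 by (auto simp: e_def)
  have "cos e < 1"
    using cos_monotone_0_pi[of 0 e] e by simp
  moreover have "pangle y x < \<epsilon>" if "cos e < pcos y x" for y
  proof -
    have "arccos (pcos y x) < arccos (cos e)"
      using that pcos_le_one[of y x] cos_ge_minus_one[of e] by (intro arccos_less_arccos) auto
    then show ?thesis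
      using e by (simp add: pangle_eq_arccos_pcos arccos_cos)
  qed
  ultimately show ?thesis
    using that[of "1 - cos e"] by simp
qed

lemma pcos_perturb_ge:
  fixes u x R :: "real^'n"
  assumes u: "norm u = 1" and x: "norm x = 1" and "\<phi> \<noteq> 0"
    and R: "norm R \<le> r * \<bar>\<phi>\<bar>" and "0 \<le> r"
  shows "(\<bar>u \<bullet> x\<bar> - r) / (1 + r) \<le> pcos (\<phi> *\<^sub>R u + R) x"
proof (cases "\<bar>u \<bullet> x\<bar> \<le> r")
  case True
  then have "(\<bar>u \<bullet> x\<bar> - r) / (1 + r) \<le> 0"
    using \<open>0 \<le> r\<close> by (simp add: divide_nonpos_pos)
  then show ?thesis
    using pcos_nonneg by (rule order_trans)
next
  case False
  define z where "z = \<phi> *\<^sub>R u + R"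
  have "\<bar>R \<bullet> x\<bar> \<le> r * \<bar>\<phi>\<bar>"
    using Cauchy_Schwarz_ineq2[of R x] x R by simp
  moreover have "\<bar>\<phi> * (u \<bullet> x)\<bar> - \<bar>R \<bullet> x\<bar> \<le> \<bar>z \<bullet> x\<bar>"
    unfolding z_def inner_add_left inner_scaleR_left by linarith
  ultimately have num: "\<bar>\<phi>\<bar> * (\<bar>u \<bullet> x\<bar> - r) \<le> \<bar>z \<bullet> x\<bar>"
    by (simp add: abs_mult right_diff_distrib mult.commute)
  have den: "norm z \<le> \<bar>\<phi>\<bar> * (1 + r)"
    using norm_triangle_ineq[of "\<phi> *\<^sub>R u" R] u R by (simp add: z_def distrib_left mult.commute)
  have pos: "0 < \<bar>\<phi>\<bar> * (\<bar>u \<bullet> x\<bar> - r)"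
    using False \<open>\<phi> \<noteq> 0\<close> by simp
  then have "0 < norm z"
    using num by auto
  then have "(\<bar>\<phi>\<bar> * (\<bar>u \<bullet> x\<bar> - r)) / (\<bar>\<phi>\<bar> * (1 + r)) \<le> \<bar>z \<bullet> x\<bar> / norm z"
    using pos num den by (intro frac_le) auto
  then show ?thesis
    using \<open>\<phi> \<noteq> 0\<close> by (simp add: pcos_def x z_def)
qed

lemma pangle_perturb_less:
  fixes x :: "real^'n"
  assumes x: "norm x = 1" and "0 < \<epsilon>"
  obtains \<delta> where "0 < \<delta>"
    "\<And>u R \<phi>. norm u = 1 \<Longrightarrow> 1 - \<delta> < \<bar>u \<bullet> x\<bar> \<Longrightarrow> \<phi> \<noteq> 0 \<Longrightarrow> norm R \<le> \<delta> * \<bar>\<phi>\<bar>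
      \<Longrightarrow> pangle (\<phi> *\<^sub>R u + R) x < \<epsilon>"
proof -
  obtain \<theta> where \<theta>: "0 < \<theta>" "\<And>y. 1 - \<theta> < pcos y x \<Longrightarrow> pangle y x < \<epsilon>"
    using pangle_less_if_pcos_gt[OF \<open>0 < \<epsilon>\<close>] by blast
  define \<delta> where "\<delta> = \<theta> / 3"
  have "0 < \<delta>"
    using \<theta>(1) by (simp add: \<delta>_def)
  moreover have "pangle (\<phi> *\<^sub>R u + R) x < \<epsilon>"
    if u: "norm u = 1" and ux: "1 - \<delta> < \<bar>u \<bullet> x\<bar>" and "\<phi> \<noteq> 0" and R: "norm R \<le> \<delta> * \<bar>\<phi>\<bar>"
    for u R and \<phi> :: real
  proof (rule \<theta>(2))
    have "1 - \<theta> \<le> (1 - 2 * \<delta>) / (1 + \<delta>)"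
      using \<theta>(1) by (simp add: \<delta>_def field_simps)
    also have "\<dots> < (\<bar>u \<bullet> x\<bar> - \<delta>) / (1 + \<delta>)"
      using ux \<theta>(1) by (intro divide_strict_right_mono) (auto simp: \<delta>_def)
    also have "\<dots> \<le> pcos (\<phi> *\<^sub>R u + R) x"
      using \<theta>(1) by (intro pcos_perturb_ge[OF u x \<open>\<phi> \<noteq> 0\<close> R]) (simp add: \<delta>_def)
    finally show "1 - \<theta> < pcos (\<phi> *\<^sub>R u + R) x" .
  qed
  ultimately show ?thesis
    by (rule that)
qed

lemma pcos_orth_le:
  fixes u x R :: "real^'n"
  assumes u: "norm u = 1" and x: "norm x = 1" and "u \<bullet> R = 0"
  shows "(pcos R x)\<^sup>2 \<le> 1 - (u \<bullet> x)\<^sup>2"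
proof (cases "R = 0")
  case True
  then show ?thesis
    using Cauchy_Schwarz_ineq2[of u x] u x by (simp add: pcos_def abs_square_le_1)
next
  case False
  define r where "r = sgn R"
  have "r \<bullet> r = 1" "u \<bullet> u = 1" "x \<bullet> x = 1" "u \<bullet> r = 0"
    using False u x \<open>u \<bullet> R = 0\<close> by (simp_all add: r_def dot_square_norm norm_sgn sgn_div_norm)
  define d where "d = x - (u \<bullet> x) *\<^sub>R u - (r \<bullet> x) *\<^sub>R r"
  have "d \<bullet> d = 1 - (u \<bullet> x)\<^sup>2 - (r \<bullet> x)\<^sup>2"
    using \<open>r \<bullet> r = 1\<close> \<open>u \<bullet> u = 1\<close> \<open>x \<bullet> x = 1\<close> \<open>u \<bullet> r = 0\<close>
    by (simp add: d_def inner_diff_left inner_diff_right inner_commute power2_eq_square algebra_simps)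
  then have "(r \<bullet> x)\<^sup>2 \<le> 1 - (u \<bullet> x)\<^sup>2"
    using inner_ge_zero[of d] by linarith
  moreover have "pcos R x = \<bar>r \<bullet> x\<bar>"
    using False x by (simp add: pcos_def r_def sgn_div_norm abs_mult divide_inverse)
  ultimately show ?thesis
    by simp
qed

section \<open>Contraction from the two conditions\<close>

lemma norm_linear_le_sum_basis:
  fixes L :: "real^'n \<Rightarrow> 'a::real_normed_vector"
  assumes "linear L"
  shows "norm (L w) \<le> norm w * (\<Sum>i\<in>UNIV. norm (L (axis i 1)))"
proof -
  have "w = (\<Sum>i\<in>UNIV. (w $ i) *\<^sub>R axis i 1)"
    using basis_expansion[of w] by (simp add: scalar_mult_eq_scaleR)
  then have "L w = (\<Sum>i\<in>UNIV. (w $ i) *\<^sub>R L (axis i 1))"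
    using assms by (metis (no_types, lifting) linear_scale linear_sum sum.cong)
  then have "norm (L w) \<le> (\<Sum>i\<in>UNIV. \<bar>w $ i\<bar> * norm (L (axis i 1)))"
    by (metis (no_types, lifting) norm_scaleR norm_sum sum.cong)
  also have "\<dots> \<le> (\<Sum>i\<in>UNIV. norm w * norm (L (axis i 1)))"
    by (intro sum_mono mult_right_mono component_le_norm_cart) simp
  finally show ?thesis
    by (simp add: sum_distrib_left)
qed

lemma linear_tendsto_zero_uniformly:
  fixes L :: "nat \<Rightarrow> real^'n \<Rightarrow> 'a::real_normed_vector"
  assumes "\<And>k. linear (L k)" and "\<And>i. (\<lambda>k. L k (axis i 1)) \<longlonglongrightarrow> 0"
  obtains \<rho> where "\<rho> \<longlonglongrightarrow> 0" "\<And>k. 0 \<le> \<rho> k" "\<And>k w. norm (L k w) \<le> norm w * \<rho> k"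
proof
  show "(\<lambda>k. \<Sum>i\<in>UNIV. norm (L k (axis i 1))) \<longlonglongrightarrow> 0"
    using tendsto_sum[of UNIV "\<lambda>i k. norm (L k (axis i 1))" "\<lambda>_. 0"]
    by (simp add: assms(2) tendsto_norm_zero)
qed (simp_all add: sum_nonneg norm_linear_le_sum_basis assms(1))

lemma unbounded_subseq_norm_gt:
  fixes f :: "nat \<Rightarrow> 'a::real_normed_vector" and b :: "nat \<Rightarrow> real"
  assumes "\<not> bounded (range f)"
  obtains \<sigma> where "strict_mono \<sigma>" "\<And>j. b j < norm (f (\<sigma> j))"
proof -
  have "\<forall>M n. \<exists>k\<ge>n. M < norm (f k)"
  proof (rule ccontr)
    assume "\<not> (\<forall>M n. \<exists>k\<ge>n. M < norm (f k))"
    then obtain M n where "\<forall>k\<ge>n. norm (f k) \<le> M"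
      by (auto simp: not_less)
    then have "f ` {n..} \<subseteq> cball 0 M"
      by auto
    then have "bounded (f ` {..<n} \<union> f ` {n..})"
      by (meson bounded_Un bounded_cball bounded_subset finite_imageI finite_imp_bounded finite_lessThan)
    moreover have "range f \<subseteq> f ` {..<n} \<union> f ` {n..}"
      by (auto simp: image_Un[symmetric])
    ultimately show False
      using assms bounded_subset by blast
  qed
  then obtain pick where pick: "\<And>M n. n \<le> pick M n \<and> M < norm (f (pick M n))"
    by metis
  define \<sigma> where "\<sigma> = rec_nat (pick (b 0) 0) (\<lambda>j s. pick (b (Suc j)) (Suc s))"
  have \<sigma>0: "\<sigma> 0 = pick (b 0) 0" and \<sigma>Suc: "\<sigma> (Suc j) = pick (b (Suc j)) (Suc (\<sigma> j))" for j
    by (simp_all add: \<sigma>_def)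
  have "strict_mono \<sigma>"
    unfolding strict_mono_Suc_iff using pick \<sigma>Suc by (metis Suc_le_lessD)
  moreover have "b j < norm (f (\<sigma> j))" for j
    by (cases j) (simp_all only: \<sigma>0 \<sigma>Suc pick)
  ultimately show ?thesis
    by (rule that)
qed

lemma tendsto_zero_if_log_rate:
  fixes f T :: "nat \<Rightarrow> real"
  assumes rate: "(\<lambda>k. ln (f k) / T k) \<longlonglongrightarrow> -1" and T: "filterlim T at_top sequentially"
    and "\<And>k. 0 < T k" and "\<And>k. 0 \<le> f k"
  shows "f \<longlonglongrightarrow> 0"
  unfolding tendsto_iff
proof (intro allI impI)
  fix e :: real
  assume "0 < e"
  have "eventually (\<lambda>k. ln (f k) / T k < -1/2 \<and> -2 * ln e \<le> T k) sequentially"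
    using order_tendstoD(2)[OF rate] T by (simp add: filterlim_at_top eventually_conj)
  then show "eventually (\<lambda>k. dist (f k) 0 < e) sequentially"
  proof (rule eventually_mono)
    fix k
    assume "ln (f k) / T k < -1/2 \<and> -2 * ln e \<le> T k"
    then have "ln (f k) < ln e"
      using \<open>0 < T k\<close> by (simp add: divide_less_eq)
    then show "dist (f k) 0 < e"
      using \<open>0 < e\<close> \<open>0 \<le> f k\<close> by (cases "f k = 0") auto
  qed
qed

lemma resid_tendsto_zero:
  assumes nz: "\<And>k. g k *v x \<noteq> 0" and "\<And>k. 0 < T k" and "filterlim T at_top sequentially"
    and rate: "v \<noteq> 0 \<Longrightarrow> (\<lambda>k. ln (dnorm (g k) x v) / T k) \<longlonglongrightarrow> -1"
  shows "(\<lambda>k. resid (g k) x v) \<longlonglongrightarrow> 0"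
proof (cases "v = 0")
  case True
  then show ?thesis
    by (simp add: linear_0[OF linear_resid])
next
  case False
  then have "(\<lambda>k. ln (norm (resid (g k) x v)) / T k) \<longlonglongrightarrow> -1"
    using rate by (simp add: dnorm_eq_norm_resid nz)
  then have "(\<lambda>k. norm (resid (g k) x v)) \<longlonglongrightarrow> 0"
    by (rule tendsto_zero_if_log_rate) (use assms in auto)
  then show ?thesis
    by (rule tendsto_norm_zero_cancel)
qed

definition attracts :: "(real^'n) set \<Rightarrow> (nat \<Rightarrow> real^'n^'n) \<Rightarrow> real^'n \<Rightarrow> bool" where
  "attracts X g x \<longleftrightarrow> (\<forall>xs. (\<forall>k. xs k \<in> X) \<and> (\<lambda>k. pangle (xs k) x) \<longlonglongrightarrow> 0
                          \<longrightarrow> (\<lambda>k. pangle (g k *v xs k) x) \<longlonglongrightarrow> 0)"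

lemma attracts_subseq:
  assumes att: "attracts X g x" and "x \<in> X" "x \<noteq> 0" and \<sigma>: "strict_mono \<sigma>"
  shows "attracts X (g \<circ> \<sigma>) x"
  unfolding attracts_def
proof (intro allI impI)
  fix ys
  assume ys: "(\<forall>j. ys j \<in> X) \<and> (\<lambda>j. pangle (ys j) x) \<longlonglongrightarrow> 0"
  define xs where "xs k = (if k \<in> range \<sigma> then ys (inv \<sigma> k) else x)" for k
  have xs\<sigma>: "xs (\<sigma> j) = ys j" for j
    using strict_mono_imp_inj_on[OF \<sigma>] by (simp add: xs_def)
  have "(\<lambda>k. pangle (xs k) x) \<longlonglongrightarrow> 0"
  proof (rule LIMSEQ_I)
    fix e :: real
    assume "0 < e"
    then obtain J where J: "\<forall>j\<ge>J. norm (pangle (ys j) x) < e"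
      using LIMSEQ_D[of _ 0] ys by (metis diff_zero)
    have "norm (pangle (xs k) x - 0) < e" if "\<sigma> J \<le> k" for k
    proof (cases "k \<in> range \<sigma>")
      case True
      then obtain j where "k = \<sigma> j"
        by blast
      with that \<sigma> J show ?thesis
        by (simp add: xs\<sigma> strict_mono_less_eq)
    qed (use \<open>0 < e\<close> \<open>x \<noteq> 0\<close> in \<open>simp add: xs_def pangle_self\<close>)
    then show "\<exists>N. \<forall>k\<ge>N. norm (pangle (xs k) x - 0) < e"
      by blast
  qed
  moreover have "\<forall>k. xs k \<in> X"
    using ys \<open>x \<in> X\<close> by (simp add: xs_def)
  ultimately have "(\<lambda>k. pangle (g k *v xs k) x) \<longlonglongrightarrow> 0"
    using att by (simp add: attracts_def)
  from LIMSEQ_subseq_LIMSEQ[OF this \<sigma>] show "(\<lambda>j. pangle ((g \<circ> \<sigma>) j *v ys j) x) \<longlonglongrightarrow> 0"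
    by (simp add: o_def xs\<sigma>)
qed

lemma image_dir_tendsto:
  assumes att: "attracts X g x" and "x \<in> X" and x: "norm x = 1" and nz: "\<And>k. g k *v x \<noteq> 0"
  shows "(\<lambda>k. \<bar>image_dir (g k) x \<bullet> x\<bar>) \<longlonglongrightarrow> 1"
proof -
  have "x \<noteq> 0"
    using x by auto
  then have "(\<lambda>k. pangle x x) \<longlonglongrightarrow> 0"
    by (simp add: pangle_self)
  then have "(\<lambda>k. pangle (g k *v x) x) \<longlonglongrightarrow> 0"
    using att[unfolded attracts_def, rule_format, of "\<lambda>k. x"] \<open>x \<in> X\<close> by simp
  then have "(\<lambda>k. pcos (g k *v x) x) \<longlonglongrightarrow> 1"
    by (rule pcos_tendsto_one)
  moreover have "pcos (g k *v x) x = \<bar>image_dir (g k) x \<bullet> x\<bar>" for k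
    using stretch_pos[OF nz[of k]] norm_image_dir[OF nz[of k]] x
    by (simp add: matrix_vector_mult_image_dir[of "g k" x] pcos_scaleR) (simp add: pcos_def)
  ultimately show ?thesis
    by simp
qed

text \<open>Points killed by the dual covector are mapped orthogonally to the image direction of x,
  which tends to \<plusminus>x.\<close>
lemma not_attracted_if_dual_covec_orth:
  assumes nz: "\<And>k. g k *v x \<noteq> 0" and x: "norm x = 1"
    and ux: "(\<lambda>k. \<bar>image_dir (g k) x \<bullet> x\<bar>) \<longlonglongrightarrow> 1"
    and orth: "\<And>k. dual_covec (g k) x \<bullet> y k = 0"
  shows "\<not> (\<lambda>k. pangle (g k *v y k) x) \<longlonglongrightarrow> 0"
proof
  assume "(\<lambda>k. pangle (g k *v y k) x) \<longlonglongrightarrow> 0"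
  then have "(\<lambda>k. (pcos (g k *v y k) x)\<^sup>2) \<longlonglongrightarrow> 1\<^sup>2"
    by (intro tendsto_power pcos_tendsto_one)
  moreover have "(\<lambda>k. 1 - \<bar>image_dir (g k) x \<bullet> x\<bar>\<^sup>2) \<longlonglongrightarrow> 1 - 1\<^sup>2"
    by (intro tendsto_diff tendsto_const tendsto_power ux)
  moreover have "(pcos (g k *v y k) x)\<^sup>2 \<le> 1 - \<bar>image_dir (g k) x \<bullet> x\<bar>\<^sup>2" for k
  proof -
    have "g k *v y k = stretch (g k) x *\<^sub>R resid (g k) x (y k)"
      using matrix_vector_mult_decomp[OF nz, of k "y k"] orth by simp
    then have "pcos (g k *v y k) x = pcos (resid (g k) x (y k)) x"
      using stretch_pos[OF nz[of k]] by (simp add: pcos_scaleR)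
    then show ?thesis
      using pcos_orth_le[OF norm_image_dir[OF nz] x image_dir_inner_resid[OF nz]] by simp
  qed
  ultimately have "1\<^sup>2 \<le> (1 - 1\<^sup>2 :: real)"
    by (intro LIMSEQ_le) auto
  then show False
    by simp
qed

lemma dual_covec_bounded:
  assumes att: "attracts X g x" and "x \<in> X" and x: "norm x = 1" and nz: "\<And>k. g k *v x \<noteq> 0"
    and P: "\<And>k. P (dual_covec (g k) x)"
    and near: "\<And>\<epsilon>. 0 < \<epsilon> \<Longrightarrow> \<exists>M. \<forall>c. P c \<and> c \<bullet> x = 1 \<and> M < norm c
                  \<longrightarrow> (\<exists>y\<in>X. c \<bullet> y = 0 \<and> pangle y x < \<epsilon>)"
  shows "bounded (range (\<lambda>k. dual_covec (g k) x))"
proof (rule ccontr)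
  assume unbounded: "\<not> bounded (range (\<lambda>k. dual_covec (g k) x))"
  have "\<forall>\<epsilon>\<in>{0<..}. \<exists>M. \<forall>c. P c \<and> c \<bullet> x = 1 \<and> M < norm c \<longrightarrow> (\<exists>y\<in>X. c \<bullet> y = 0 \<and> pangle y x < \<epsilon>)"
    using near by simp
  then obtain M where M: "\<forall>\<epsilon>\<in>{0<..}. \<forall>c. P c \<and> c \<bullet> x = 1 \<and> M \<epsilon> < norm c
                            \<longrightarrow> (\<exists>y\<in>X. c \<bullet> y = 0 \<and> pangle y x < \<epsilon>)"
    by (rule bchoice[THEN exE])
  obtain \<sigma> where \<sigma>: "strict_mono \<sigma>" and large: "\<And>j. M (1 / Suc j) < norm (dual_covec (g (\<sigma> j)) x)"
    using unbounded_subseq_norm_gt[OF unbounded, of "\<lambda>j. M (1 / Suc j)"] by metis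
  have "\<forall>j. \<exists>y\<in>X. dual_covec (g (\<sigma> j)) x \<bullet> y = 0 \<and> pangle y x < 1 / Suc j"
    using M P large dual_covec_inner_self[OF nz] by simp
  then obtain y where y: "\<And>j. y j \<in> X" "\<And>j. dual_covec (g (\<sigma> j)) x \<bullet> y j = 0"
    and close: "\<And>j. pangle (y j) x < 1 / Suc j"
    by (metis bchoice[of UNIV] UNIV_I)
  have "(\<lambda>j. pangle (y j) x) \<longlonglongrightarrow> 0"
  proof (rule tendsto_sandwich[OF _ _ tendsto_const LIMSEQ_inverse_real_of_nat])
    show "\<forall>\<^sub>F j in sequentially. 0 \<le> pangle (y j) x"
      by (simp add: pangle_nonneg)
    show "\<forall>\<^sub>F j in sequentially. pangle (y j) x \<le> inverse (real (Suc j))"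
      using close by (simp add: inverse_eq_divide less_imp_le)
  qed
  moreover have att\<sigma>: "attracts X (g \<circ> \<sigma>) x"
    using x by (intro attracts_subseq[OF att \<open>x \<in> X\<close> _ \<sigma>]) auto
  ultimately have "(\<lambda>j. pangle (g (\<sigma> j) *v y j) x) \<longlonglongrightarrow> 0"
    using y(1) unfolding attracts_def by simp
  moreover have "(\<lambda>j. \<bar>image_dir (g (\<sigma> j)) x \<bullet> x\<bar>) \<longlonglongrightarrow> 1"
    using image_dir_tendsto[OF att\<sigma> \<open>x \<in> X\<close> x] nz by simp
  ultimately show False
    using not_attracted_if_dual_covec_orth[of "\<lambda>j. g (\<sigma> j)" x y, OF nz x _ y(2)] by blast
qed

definition contracts_on :: "(nat \<Rightarrow> real^'n^'n) \<Rightarrow> (real^'n) set \<Rightarrow> real^'n \<Rightarrow> bool" where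
  "contracts_on g W x \<longleftrightarrow> (\<forall>K. compact K \<and> K \<subseteq> W \<longrightarrow>
     (\<forall>\<epsilon>>0. eventually (\<lambda>k. \<forall>y\<in>K. pangle (g k *v y) x < \<epsilon>) sequentially))"

lemma contracts_on_subset: "contracts_on g W x \<Longrightarrow> V \<subseteq> W \<Longrightarrow> contracts_on g V x"
  unfolding contracts_on_def by blast

lemma compact_inner_bounded_away:
  fixes K :: "(real^'n) set"
  assumes K: "compact K" "\<And>w. w \<in> K \<Longrightarrow> c0 \<bullet> w \<noteq> 0"
  obtains m B where "0 < m" "0 < B" "\<And>w. w \<in> K \<Longrightarrow> norm w \<le> B"
    "\<And>c w. w \<in> K \<Longrightarrow> norm (c - c0) < m / (2 * B) \<Longrightarrow> m / 2 \<le> \<bar>c \<bullet> w\<bar>"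
proof (cases "K = {}")
  case True
  then show ?thesis
    using that[of 1 1] by simp
next
  case False
  have "continuous_on K (\<lambda>w. \<bar>c0 \<bullet> w\<bar>)"
    by (intro continuous_intros)
  then obtain w0 where "w0 \<in> K" and w0: "\<And>w. w \<in> K \<Longrightarrow> \<bar>c0 \<bullet> w0\<bar> \<le> \<bar>c0 \<bullet> w\<bar>"
    using continuous_attains_inf[OF K(1) False] by metis
  define m where "m = \<bar>c0 \<bullet> w0\<bar>"
  have "0 < m"
    using K(2)[OF \<open>w0 \<in> K\<close>] by (simp add: m_def)
  obtain B where "0 < B" and B: "\<And>w. w \<in> K \<Longrightarrow> norm w \<le> B"
    using compact_imp_bounded[OF K(1)] unfolding bounded_pos by metis
  have "m / 2 \<le> \<bar>c \<bullet> w\<bar>" if "w \<in> K" and "norm (c - c0) < m / (2 * B)" for c w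
  proof -
    have "\<bar>(c - c0) \<bullet> w\<bar> \<le> norm (c - c0) * norm w"
      by (rule Cauchy_Schwarz_ineq2)
    also have "\<dots> \<le> m / (2 * B) * B"
      using that B[OF \<open>w \<in> K\<close>] \<open>0 < m\<close> \<open>0 < B\<close> by (intro mult_mono) auto
    finally show ?thesis
      using w0[OF \<open>w \<in> K\<close>] \<open>0 < B\<close> by (simp add: m_def inner_diff_left) (smt (verit))
  qed
  with \<open>0 < m\<close> \<open>0 < B\<close> B show ?thesis
    by (rule that)
qed

lemma uniform_contraction_compact:
  assumes nz: "\<And>k. g k *v x \<noteq> 0" and x: "norm x = 1"
    and ux: "(\<lambda>k. \<bar>image_dir (g k) x \<bullet> x\<bar>) \<longlonglongrightarrow> 1"
    and c: "(\<lambda>k. dual_covec (g k) x) \<longlonglongrightarrow> c0"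
    and R: "\<And>w. (\<lambda>k. resid (g k) x w) \<longlonglongrightarrow> 0"
    and K: "compact K" "\<And>w. w \<in> K \<Longrightarrow> c0 \<bullet> w \<noteq> 0" and "0 < \<epsilon>"
  shows "eventually (\<lambda>k. \<forall>y\<in>K. pangle (g k *v y) x < \<epsilon>) sequentially"
proof -
  obtain \<delta> where "0 < \<delta>" and \<delta>: "\<And>u R \<phi>. norm u = 1 \<Longrightarrow> 1 - \<delta> < \<bar>u \<bullet> x\<bar> \<Longrightarrow> \<phi> \<noteq> 0
      \<Longrightarrow> norm R \<le> \<delta> * \<bar>\<phi>\<bar> \<Longrightarrow> pangle (\<phi> *\<^sub>R u + R) x < \<epsilon>"
    using pangle_perturb_less[OF x \<open>0 < \<epsilon>\<close>] by metis
  obtain m B where "0 < m" "0 < B" and B: "\<And>w. w \<in> K \<Longrightarrow> norm w \<le> B"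
    and m: "\<And>c w. w \<in> K \<Longrightarrow> norm (c - c0) < m / (2 * B) \<Longrightarrow> m / 2 \<le> \<bar>c \<bullet> w\<bar>"
    using compact_inner_bounded_away[OF K(1,2)] by metis
  obtain \<rho> where "\<rho> \<longlonglongrightarrow> 0" and "\<And>k. 0 \<le> \<rho> k" and \<rho>: "\<And>k w. norm (resid (g k) x w) \<le> norm w * \<rho> k"
    using linear_tendsto_zero_uniformly[of "\<lambda>k. resid (g k) x", OF linear_resid R] by metis
  have "eventually (\<lambda>k. 1 - \<delta> < \<bar>image_dir (g k) x \<bullet> x\<bar>) sequentially"
    using order_tendstoD(1)[OF ux] \<open>0 < \<delta>\<close> by simp
  moreover have "eventually (\<lambda>k. norm (dual_covec (g k) x - c0) < m / (2 * B)) sequentially"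
    using c \<open>0 < m\<close> \<open>0 < B\<close> by (simp add: tendsto_iff dist_norm)
  moreover have "eventually (\<lambda>k. \<rho> k < \<delta> * m / (2 * B)) sequentially"
    using order_tendstoD(2)[OF \<open>\<rho> \<longlonglongrightarrow> 0\<close>] \<open>0 < \<delta>\<close> \<open>0 < m\<close> \<open>0 < B\<close> by simp
  ultimately show ?thesis
  proof eventually_elim
    case (elim k)
    show "\<forall>y\<in>K. pangle (g k *v y) x < \<epsilon>"
    proof
      fix y
      assume "y \<in> K"
      define \<phi> where "\<phi> = dual_covec (g k) x \<bullet> y"
      have "m / 2 \<le> \<bar>\<phi>\<bar>"
        unfolding \<phi>_def using m[OF \<open>y \<in> K\<close> elim(2)] .
      have "norm (resid (g k) x y) \<le> B * (\<delta> * m / (2 * B))"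
        using \<rho>[of k y] mult_mono[OF B[OF \<open>y \<in> K\<close>] less_imp_le[OF elim(3)]] \<open>0 \<le> \<rho> k\<close> \<open>0 < B\<close>
        by simp
      also have "\<dots> \<le> \<delta> * \<bar>\<phi>\<bar>"
        using \<open>m / 2 \<le> \<bar>\<phi>\<bar>\<close> \<open>0 < B\<close> \<open>0 < \<delta>\<close> by simp
      finally have "pangle (\<phi> *\<^sub>R image_dir (g k) x + resid (g k) x y) x < \<epsilon>"
        using \<open>m / 2 \<le> \<bar>\<phi>\<bar>\<close> \<open>0 < m\<close> by (intro \<delta>[OF norm_image_dir[OF nz] elim(1)]) auto
      then show "pangle (g k *v y) x < \<epsilon>"
        using stretch_pos[OF nz[of k]]
        by (simp add: matrix_vector_mult_decomp[OF nz, of k y] pangle_scaleR \<phi>_def)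
    qed
  qed
qed

lemma uniform_contraction:
  assumes "\<And>k. g k *v x \<noteq> 0" and "norm x = 1"
    and "(\<lambda>k. \<bar>image_dir (g k) x \<bullet> x\<bar>) \<longlonglongrightarrow> 1"
    and "(\<lambda>k. dual_covec (g k) x) \<longlonglongrightarrow> c0"
    and "\<And>w. (\<lambda>k. resid (g k) x w) \<longlonglongrightarrow> 0"
  shows "contracts_on g {w. c0 \<bullet> w \<noteq> 0} x"
  unfolding contracts_on_def using uniform_contraction_compact[OF assms] by blast

lemma contracting_subsequence:
  assumes att: "attracts X g x" and "x \<in> X" and x: "norm x = 1" and nz: "\<And>k. g k *v x \<noteq> 0"
    and R: "\<And>w. (\<lambda>k. resid (g k) x w) \<longlonglongrightarrow> 0"
    and bdd: "bounded (range (\<lambda>k. dual_covec (g k) x))"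
  obtains r c0 where "strict_mono r" "(\<lambda>k. dual_covec (g (r k)) x) \<longlonglongrightarrow> c0" "c0 \<bullet> x = 1"
    "contracts_on (\<lambda>k. g (r k)) {w. c0 \<bullet> w \<noteq> 0} x"
proof -
  obtain c0 r where r: "strict_mono r" and c: "(\<lambda>k. dual_covec (g (r k)) x) \<longlonglongrightarrow> c0"
    using bounded_imp_convergent_subsequence[OF bdd] by (auto simp: o_def)
  have "(\<lambda>k. dual_covec (g (r k)) x \<bullet> x) \<longlonglongrightarrow> c0 \<bullet> x"
    by (intro tendsto_inner c tendsto_const)
  then have "(\<lambda>k. 1::real) \<longlonglongrightarrow> c0 \<bullet> x"
    by (simp add: dual_covec_inner_self nz)
  then have "c0 \<bullet> x = 1"
    by (rule LIMSEQ_unique[OF tendsto_const, symmetric])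
  moreover have "(\<lambda>k. \<bar>image_dir (g (r k)) x \<bullet> x\<bar>) \<longlonglongrightarrow> 1"
    using LIMSEQ_subseq_LIMSEQ[OF image_dir_tendsto[OF att \<open>x \<in> X\<close> x nz] r] by (simp add: o_def)
  moreover have "(\<lambda>k. resid (g (r k)) x w) \<longlonglongrightarrow> 0" for w
    using LIMSEQ_subseq_LIMSEQ[OF R r] by (simp add: o_def)
  ultimately have "contracts_on (\<lambda>k. g (r k)) {w. c0 \<bullet> w \<noteq> 0} x"
    using uniform_contraction[of "\<lambda>k. g (r k)", OF nz x _ c] by simp
  with r c \<open>c0 \<bullet> x = 1\<close> show ?thesis
    by (rule that)
qed

section \<open>Real projective space\<close>

lemma RP_orth_point_near:
  fixes x :: "real^'n"
  assumes x: "norm x = 1" and "0 < \<epsilon>"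
  shows "\<exists>M. \<forall>c. c \<bullet> x = 1 \<and> M < norm c \<longrightarrow> (\<exists>y\<in>RP_space. c \<bullet> y = 0 \<and> pangle y x < \<epsilon>)"
proof -
  obtain \<delta> where "0 < \<delta>" and \<delta>: "\<And>u R \<phi>. norm u = 1 \<Longrightarrow> 1 - \<delta> < \<bar>u \<bullet> x\<bar> \<Longrightarrow> \<phi> \<noteq> 0
      \<Longrightarrow> norm R \<le> \<delta> * \<bar>\<phi>\<bar> \<Longrightarrow> pangle (\<phi> *\<^sub>R u + R) x < \<epsilon>"
    using pangle_perturb_less[OF x \<open>0 < \<epsilon>\<close>] by metis
  have "\<exists>y\<in>RP_space. c \<bullet> y = 0 \<and> pangle y x < \<epsilon>" if "c \<bullet> x = 1" and "1 + 1 / \<delta> < norm c" for c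
  proof -
    define p where "p = c - x"
    have xx: "x \<bullet> x = 1"
      using x by (simp add: dot_square_norm)
    have "norm c \<le> norm p + 1"
      using norm_triangle_ineq[of p x] x by (simp add: p_def)
    then have "1 / \<delta> < norm p"
      using that(2) by simp
    then have "0 < norm p" and small: "1 / norm p < \<delta>"
      using \<open>0 < \<delta>\<close> by (auto simp: divide_less_eq mult.commute less_trans[OF _ \<open>1 / \<delta> < norm p\<close>])
    have "p \<bullet> x = 0"
      using that(1) xx by (simp add: p_def inner_diff_left)
    define y where "y = 1 *\<^sub>R x + (- (1 / (norm p)\<^sup>2)) *\<^sub>R p"
    have "c \<bullet> p = (p + x) \<bullet> p"
      by (simp add: p_def)
    also have "\<dots> = (norm p)\<^sup>2"
      using \<open>p \<bullet> x = 0\<close> by (simp add: inner_add_left dot_square_norm inner_commute[of x p])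
    finally have "c \<bullet> p = (norm p)\<^sup>2" .
    then have "c \<bullet> y = 0"
      using \<open>0 < norm p\<close> that(1) by (simp add: y_def inner_diff_right power2_eq_square)
    moreover have "y \<in> RP_space"
      using \<open>p \<bullet> x = 0\<close> xx by (auto simp: y_def inner_diff_left RP_space_def)
    moreover have "pangle y x < \<epsilon>"
      unfolding y_def
      using \<open>0 < norm p\<close> \<open>0 < \<delta>\<close> small xx x by (intro \<delta>) (simp_all add: power2_eq_square)
    ultimately show ?thesis
      by blast
  qed
  then show ?thesis
    by blast
qed

lemma RP_contraction:
  fixes g :: "nat \<Rightarrow> real^'n^'n"
  assumes "\<And>k. g k \<in> PGL_lifts" and "\<And>k. 0 < T k" and "filterlim T at_top sequentially"
    and x: "norm x = 1" and att: "attracts RP_space g x"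
    and rate: "\<And>v. v \<in> RP_tangent x \<Longrightarrow> v \<noteq> 0 \<Longrightarrow> (\<lambda>k. ln (dnorm (g k) x v) / T k) \<longlonglongrightarrow> -1"
  shows "\<exists>r. strict_mono r \<and> (\<exists>W\<in>affine_charts. x \<in> W \<and> contracts_on (\<lambda>k. g (r k)) W x)"
proof -
  have "x \<noteq> 0" and "x \<in> RP_space" and xx: "x \<bullet> x = 1"
    using x by (auto simp: RP_space_def dot_square_norm)
  have nz: "g k *v x \<noteq> 0" for k
    using assms(1)[of k] \<open>x \<noteq> 0\<close> by (simp add: PGL_lifts_def invertible_mult_vec_nonzero)
  have "(\<lambda>k. resid (g k) x w) \<longlonglongrightarrow> 0" for w
  proof -
    have "(\<lambda>k. resid (g k) x (w - (w \<bullet> x) *\<^sub>R x)) \<longlonglongrightarrow> 0"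
      using rate xx by (intro resid_tendsto_zero[OF nz assms(2,3)]) (simp add: RP_tangent_def inner_diff_left)
    then show ?thesis
      by (simp add: linear_diff[OF linear_resid] linear_scale[OF linear_resid] resid_self[OF nz])
  qed
  moreover have "bounded (range (\<lambda>k. dual_covec (g k) x))"
  proof (rule dual_covec_bounded[OF att \<open>x \<in> RP_space\<close> x nz, of "\<lambda>_. True"])
    show "\<exists>M. \<forall>c. True \<and> c \<bullet> x = 1 \<and> M < norm c \<longrightarrow> (\<exists>y\<in>RP_space. c \<bullet> y = 0 \<and> pangle y x < \<epsilon>)"
      if "0 < \<epsilon>" for \<epsilon>
      using RP_orth_point_near[OF x that] by simp
  qed simp
  ultimately obtain r c0 where "strict_mono r" "(\<lambda>k. dual_covec (g (r k)) x) \<longlonglongrightarrow> c0" "c0 \<bullet> x = 1"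
    and contr: "contracts_on (\<lambda>k. g (r k)) {w. c0 \<bullet> w \<noteq> 0} x"
    by (rule contracting_subsequence[OF att \<open>x \<in> RP_space\<close> x nz])
  define W where "W = {w. w \<noteq> 0 \<and> c0 \<bullet> w \<noteq> 0}"
  have "c0 \<noteq> 0"
    using \<open>c0 \<bullet> x = 1\<close> by auto
  then have "W \<in> affine_charts"
    unfolding affine_charts_def W_def by blast
  moreover have "x \<in> W"
    using \<open>x \<noteq> 0\<close> \<open>c0 \<bullet> x = 1\<close> by (simp add: W_def)
  moreover have "contracts_on (\<lambda>k. g (r k)) W x"
    by (rule contracts_on_subset[OF contr]) (auto simp: W_def)
  ultimately show ?thesis
    using \<open>strict_mono r\<close> by blast
qed

section \<open>The Einstein universe\<close>

abbreviation sign_vector :: "('n \<Rightarrow> real) \<Rightarrow> bool" where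
  "sign_vector s \<equiv> \<forall>i. s i = 1 \<or> s i = -1"

definition diag_mult :: "('n \<Rightarrow> real) \<Rightarrow> real^'n \<Rightarrow> real^'n" where
  "diag_mult s v = (\<chi> i. s i * v $ i)"

definition coord_proj :: "'n set \<Rightarrow> real^'n \<Rightarrow> real^'n" where
  "coord_proj I v = (\<chi> i. if i \<in> I then v $ i else 0)"

lemma signform_eq_inner: "signform s u v = u \<bullet> diag_mult s v"
  by (simp add: signform_def inner_vec_def diag_mult_def algebra_simps)

lemma inner_diag_mult_left: "diag_mult s u \<bullet> v = u \<bullet> diag_mult s v"
  by (simp add: inner_vec_def diag_mult_def algebra_simps)

lemma linear_diag_mult: "linear (diag_mult s)"
  by (rule linearI) (simp_all add: diag_mult_def vec_eq_iff algebra_simps)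

lemma diag_mult_diag_mult:
  assumes "sign_vector s"
  shows "diag_mult s (diag_mult s v) = v"
proof -
  have "s i * (s i * v $ i) = v $ i" for i
    using assms[rule_format, of i] by auto
  then show ?thesis
    by (simp add: diag_mult_def vec_eq_iff)
qed

lemma inner_diag_mult_diag_mult: "sign_vector s \<Longrightarrow> diag_mult s u \<bullet> diag_mult s v = u \<bullet> v"
  by (simp add: inner_diag_mult_left diag_mult_diag_mult)

lemma norm_diag_mult: "sign_vector s \<Longrightarrow> norm (diag_mult s v) = norm v"
  by (simp add: norm_eq_sqrt_inner inner_diag_mult_diag_mult)

lemma signform_commute: "signform s u v = signform s v u"
  by (simp add: signform_def algebra_simps)

lemma signform_diag_mult: "sign_vector s \<Longrightarrow> signform s (diag_mult s u) (diag_mult s v) = signform s u v"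
  by (simp add: signform_eq_inner inner_diag_mult_left diag_mult_diag_mult)

lemma abs_signform_le: "sign_vector s \<Longrightarrow> \<bar>signform s u v\<bar> \<le> norm u * norm v"
  using Cauchy_Schwarz_ineq2[of u "diag_mult s v"] by (simp add: signform_eq_inner norm_diag_mult)

lemma Ein_unit_frame:
  assumes s: "sign_vector s" and x: "x \<in> Ein_space s" "norm x = 1"
  shows "x \<bullet> x = 1" "diag_mult s x \<bullet> diag_mult s x = 1" "x \<bullet> diag_mult s x = 0"
    "diag_mult s x \<bullet> x = 0"
  using x s by (simp_all add: dot_square_norm inner_diag_mult_diag_mult Ein_space_def signform_eq_inner
      inner_diag_mult_left norm_diag_mult)

lemma coord_proj_add_compl: "coord_proj I v + coord_proj (- I) v = v"
  by (simp add: coord_proj_def vec_eq_iff)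

lemma inner_coord_proj_left: "coord_proj I u \<bullet> v = u \<bullet> coord_proj I v"
  unfolding coord_proj_def inner_vec_def by (intro sum.cong) auto

lemma coord_proj_coord_proj: "coord_proj I (coord_proj I v) = coord_proj I v"
  by (simp add: coord_proj_def vec_eq_iff)

lemma coord_proj_compl_coord_proj: "coord_proj (- I) (coord_proj I v) = 0"
  by (simp add: coord_proj_def vec_eq_iff)

lemma linear_coord_proj: "linear (coord_proj I)"
  by (rule linearI) (simp_all add: coord_proj_def vec_eq_iff)

lemma signform_coord_proj:
  assumes "sign_vector s"
  shows "signform s u v = coord_proj {i. s i = 1} u \<bullet> coord_proj {i. s i = 1} v
                          - coord_proj (- {i. s i = 1}) u \<bullet> coord_proj (- {i. s i = 1}) v"
proof -
  have "diag_mult s v = coord_proj {i. s i = 1} v - coord_proj (- {i. s i = 1}) v"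
    using assms by (auto simp: diag_mult_def coord_proj_def vec_eq_iff dest: spec)
  then show ?thesis
    by (simp add: signform_eq_inner inner_diff_right inner_coord_proj_left coord_proj_coord_proj)
qed

lemma exists_unit_orth_in_coords:
  fixes x :: "real^'n"
  assumes "2 \<le> card I"
  shows "\<exists>f. norm f = 1 \<and> coord_proj I f = f \<and> f \<bullet> x = 0"
proof -
  obtain i j where "i \<in> I" "j \<in> I" "i \<noteq> j"
    using assms by (meson card_2_iff' ex_card subset_iff)
  define h :: "real^'n" where "h = x $ j *\<^sub>R axis i 1 - x $ i *\<^sub>R axis j 1"
  have hx: "h \<bullet> x = 0"
    by (simp add: h_def inner_diff_left inner_axis')
  have hI: "coord_proj I h = h"
    using \<open>i \<in> I\<close> \<open>j \<in> I\<close> by (auto simp: coord_proj_def h_def vec_eq_iff axis_def)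
  show ?thesis
  proof (cases "h = 0")
    case True
    then have "x $ i = 0"
      using \<open>i \<noteq> j\<close> by (auto simp: h_def vec_eq_iff axis_def dest: spec[of _ j])
    moreover have "coord_proj I (axis i 1) = axis i 1"
      using \<open>i \<in> I\<close> by (auto simp: coord_proj_def vec_eq_iff axis_def)
    ultimately show ?thesis
      by (intro exI[of _ "axis i 1"]) (simp add: inner_axis' norm_axis_1)
  next
    case False
    then show ?thesis
      using hx hI by (intro exI[of _ "sgn h"])
        (simp add: norm_sgn sgn_div_norm linear_scale[OF linear_coord_proj])
  qed
qed

lemma unit_pairing_in_coords:
  assumes "norm f = 1" "coord_proj I f = f" "f \<bullet> x = 0" and "coord_proj I z = z" "z \<bullet> x = 0"
  shows "\<exists>e. norm e = 1 \<and> coord_proj I e = e \<and> e \<bullet> x = 0 \<and> z \<bullet> e = norm z"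
proof (cases "z = 0")
  case True
  then show ?thesis
    using assms(1-3) by auto
next
  case False
  then show ?thesis
    using assms(4,5) by (intro exI[of _ "sgn z"])
      (simp add: norm_sgn sgn_div_norm linear_scale[OF linear_coord_proj] dot_square_norm power2_eq_square)
qed

lemma isotropic_pairing:
  assumes s: "sign_vector s" and P: "P = {i. s i = 1}"
    and t: "t \<bullet> x = 0" "t \<bullet> diag_mult s x = 0"
    and fp: "norm fp = 1" "coord_proj P fp = fp" "fp \<bullet> x = 0"
    and fm: "norm fm = 1" "coord_proj (- P) fm = fm" "fm \<bullet> x = 0"
  shows "\<exists>e. signform s e e = 0 \<and> e \<bullet> x = 0 \<and> e \<bullet> diag_mult s x = 0 \<and> norm e \<le> 2
             \<and> norm t \<le> signform s t e"
proof -
  have B: "signform s u v = coord_proj P u \<bullet> v - coord_proj (- P) u \<bullet> v" for u v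
    using signform_coord_proj[OF s, of u v]
    by (simp add: P inner_coord_proj_left coord_proj_coord_proj)
  define tp where "tp = coord_proj P t"
  define tm where "tm = coord_proj (- P) t"
  have "tp + tm = t"
    by (simp add: tp_def tm_def coord_proj_add_compl)
  then have "tp \<bullet> x + tm \<bullet> x = 0"
    using t(1) by (metis inner_add_left)
  moreover have "tp \<bullet> x - tm \<bullet> x = 0"
    using t(2) B[of t x] by (simp add: tp_def tm_def signform_eq_inner)
  ultimately have "tp \<bullet> x = 0" "tm \<bullet> x = 0"
    by linarith+
  moreover have "coord_proj P tp = tp" "coord_proj (- P) tm = tm"
    by (simp_all add: tp_def tm_def coord_proj_coord_proj)
  ultimately obtain ep em where ep: "norm ep = 1" "coord_proj P ep = ep" "ep \<bullet> x = 0" "tp \<bullet> ep = norm tp"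
    and em: "norm em = 1" "coord_proj (- P) em = em" "em \<bullet> x = 0" "tm \<bullet> em = norm tm"
    using unit_pairing_in_coords[OF fp] unit_pairing_in_coords[OF fm] by meson
  define e where "e = ep - em"
  have "coord_proj P em = 0" "coord_proj (- P) ep = 0"
    using coord_proj_compl_coord_proj[of "- P" em] coord_proj_compl_coord_proj[of P ep] ep(2) em(2)
    by simp_all
  then have Pe: "coord_proj P e = ep" and Ne: "coord_proj (- P) e = - em"
    using ep(2) em(2) by (simp_all add: e_def linear_diff[OF linear_coord_proj])
  have "signform s e e = ep \<bullet> e + em \<bullet> e"
    by (simp add: B Pe Ne)
  also have "\<dots> = 0"
    using ep(1) em(1) by (simp add: e_def inner_diff_right dot_square_norm inner_commute)
  finally have "signform s e e = 0" .
  moreover have "e \<bullet> x = 0"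
    using ep(3) em(3) by (simp add: e_def inner_diff_left)
  moreover have "e \<bullet> diag_mult s x = 0"
    using ep(3) em(3) B[of e x] by (simp add: Pe Ne signform_eq_inner)
  moreover have "norm e \<le> 2"
    using norm_triangle_ineq4[of ep em] ep(1) em(1) by (simp add: e_def)
  moreover have "norm t \<le> signform s t e"
  proof -
    have "signform s t e = norm tp + norm tm"
      using signform_coord_proj[OF s, of t e] ep(4) em(4)
      by (simp add: P[symmetric] Pe Ne flip: tp_def tm_def)
    moreover have "norm t \<le> norm tp + norm tm"
      using norm_triangle_ineq[of tp tm] \<open>tp + tm = t\<close> by simp
    ultimately show ?thesis
      by simp
  qed
  ultimately show ?thesis
    by blast
qed

definition transverse_part :: "('n \<Rightarrow> real) \<Rightarrow> real^'n \<Rightarrow> real^'n \<Rightarrow> real^'n" where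
  "transverse_part s x c = diag_mult s c - (diag_mult s c \<bullet> x) *\<^sub>R x - diag_mult s x"

lemma transverse_part_orth:
  assumes s: "sign_vector s" and x: "x \<in> Ein_space s" "norm x = 1" and c: "c \<bullet> x = 1"
  shows "transverse_part s x c \<bullet> x = 0" "transverse_part s x c \<bullet> diag_mult s x = 0"
proof -
  have "diag_mult s c \<bullet> diag_mult s x = 1"
    using c s by (simp add: inner_diag_mult_diag_mult)
  then show "transverse_part s x c \<bullet> x = 0" "transverse_part s x c \<bullet> diag_mult s x = 0"
    using Ein_unit_frame[OF s x] by (simp_all add: transverse_part_def inner_diff_left)
qed

lemma inner_eq_signform_transverse_part:
  assumes s: "sign_vector s" and e: "e \<bullet> x = 0" "e \<bullet> diag_mult s x = 0"
  shows "c \<bullet> e = signform s (transverse_part s x c) e"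
proof -
  have "x \<bullet> diag_mult s e = 0"
    using e(2) inner_diag_mult_left[of s x e] by (simp add: inner_commute[of _ e])
  moreover have "diag_mult s x \<bullet> diag_mult s e = 0" "c \<bullet> e = diag_mult s c \<bullet> diag_mult s e"
    using e(1) s by (simp_all add: inner_diag_mult_diag_mult inner_commute[of x e])
  ultimately show ?thesis
    by (simp add: transverse_part_def signform_eq_inner inner_diff_left)
qed

text \<open>Since B(x, x) = B(Jx, Jx) = 0 and B(x, Jx) = 1, isotropy of Jc bounds the component of
  Jc along x by the square of its transverse part.\<close>
lemma norm_le_transverse_part:
  assumes s: "sign_vector s" and x: "x \<in> Ein_space s" "norm x = 1"
    and c: "c \<bullet> x = 1" "signform s c c = 0"
  shows "norm c \<le> (norm (transverse_part s x c) + 1)\<^sup>2"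
proof -
  define y v t where "y = diag_mult s x" and "v = diag_mult s c" and "t = transverse_part s x c"
  define \<alpha> where "\<alpha> = v \<bullet> x"
  note frame = Ein_unit_frame[OF s x, folded y_def]
  have tx: "t \<bullet> x = 0" and ty: "t \<bullet> y = 0"
    using transverse_part_orth[OF s x c(1)] by (simp_all add: t_def y_def)
  have v: "v = \<alpha> *\<^sub>R x + y + t"
    by (simp add: t_def transverse_part_def \<alpha>_def v_def y_def)
  have "x \<bullet> diag_mult s t = 0"
    using ty inner_diag_mult_left[of s x t] by (simp add: y_def inner_commute[of _ t])
  moreover have "y \<bullet> diag_mult s t = 0"
    using tx s by (simp add: y_def inner_diag_mult_diag_mult inner_commute[of x t])
  moreover have "diag_mult s v = \<alpha> *\<^sub>R y + x + diag_mult s t"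
    using s by (simp add: v linear_add[OF linear_diag_mult] linear_scale[OF linear_diag_mult] y_def
        diag_mult_diag_mult)
  ultimately have "signform s v v = 2 * \<alpha> + signform s t t"
    using frame tx ty by (simp add: signform_eq_inner v inner_add_left inner_add_right inner_commute)
  moreover have "signform s v v = 0"
    using c(2) s by (simp add: v_def signform_diag_mult)
  ultimately have "\<bar>\<alpha>\<bar> \<le> (norm t)\<^sup>2 / 2"
    using abs_signform_le[OF s, of t t] by (simp add: power2_eq_square)
  moreover have "norm v \<le> \<bar>\<alpha>\<bar> + 1 + norm t"
    using norm_triangle_ineq[of "\<alpha> *\<^sub>R x + y" t] norm_triangle_ineq[of "\<alpha> *\<^sub>R x" y] x(2) frame
    by (simp add: v norm_eq_sqrt_inner)
  moreover have "norm v = norm c"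
    using s by (simp add: v_def norm_diag_mult)
  ultimately have "norm c \<le> (norm t)\<^sup>2 + 2 * norm t + 1"
    using norm_ge_zero[of t] zero_le_power2[of "norm t"] by linarith
  then show ?thesis
    by (simp add: t_def power2_sum)
qed

lemma Ein_space_diff_isotropic:
  assumes s: "sign_vector s" and x: "x \<in> Ein_space s" "norm x = 1"
    and e: "signform s e e = 0" "e \<bullet> x = 0" "e \<bullet> diag_mult s x = 0"
  shows "x - a *\<^sub>R e \<in> Ein_space s"
proof -
  have "x \<bullet> diag_mult s e = 0"
    using e(3) by (simp add: inner_diag_mult_left[of s x e, symmetric] inner_commute)
  then have "signform s (x - a *\<^sub>R e) (x - a *\<^sub>R e) = 0"
    using x(1) e(1,3)
    by (simp add: signform_eq_inner Ein_space_def linear_diff[OF linear_diag_mult]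
        linear_scale[OF linear_diag_mult] inner_diff_left inner_diff_right)
  moreover have "(x - a *\<^sub>R e) \<bullet> x = 1"
    using e(2) Ein_unit_frame[OF s x] by (simp add: inner_diff_left)
  ultimately show ?thesis
    by (auto simp: Ein_space_def)
qed

lemma Ein_orth_point_near:
  assumes s: "sign_vector s" and x: "x \<in> Ein_space s" "norm x = 1"
    and fp: "norm fp = 1" "coord_proj {i. s i = 1} fp = fp" "fp \<bullet> x = 0"
    and fm: "norm fm = 1" "coord_proj (- {i. s i = 1}) fm = fm" "fm \<bullet> x = 0"
    and "0 < \<epsilon>"
  shows "\<exists>M. \<forall>c. signform s c c = 0 \<and> c \<bullet> x = 1 \<and> M < norm c
                  \<longrightarrow> (\<exists>y\<in>Ein_space s. c \<bullet> y = 0 \<and> pangle y x < \<epsilon>)"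
proof -
  obtain \<delta> where "0 < \<delta>" and \<delta>: "\<And>u R \<phi>. norm u = 1 \<Longrightarrow> 1 - \<delta> < \<bar>u \<bullet> x\<bar> \<Longrightarrow> \<phi> \<noteq> 0
      \<Longrightarrow> norm R \<le> \<delta> * \<bar>\<phi>\<bar> \<Longrightarrow> pangle (\<phi> *\<^sub>R u + R) x < \<epsilon>"
    using pangle_perturb_less[OF x(2) \<open>0 < \<epsilon>\<close>] by metis
  have "\<exists>y\<in>Ein_space s. c \<bullet> y = 0 \<and> pangle y x < \<epsilon>"
    if c: "signform s c c = 0" "c \<bullet> x = 1" and large: "(2 / \<delta> + 1)\<^sup>2 < norm c" for c
  proof -
    define t where "t = transverse_part s x c"
    have "2 / \<delta> < norm t"
      using large norm_le_transverse_part[OF s x c(2,1)]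
        power_less_imp_less_base[of "2 / \<delta> + 1" 2 "norm t + 1"] by (simp add: t_def)
    obtain e where e: "signform s e e = 0" "e \<bullet> x = 0" "e \<bullet> diag_mult s x = 0" "norm e \<le> 2"
      and "norm t \<le> signform s t e"
      using isotropic_pairing[OF s refl transverse_part_orth[OF s x c(2), folded t_def] fp fm] by metis
    define \<beta> where "\<beta> = c \<bullet> e"
    have "2 / \<delta> < \<beta>"
      using \<open>2 / \<delta> < norm t\<close> \<open>norm t \<le> signform s t e\<close> inner_eq_signform_transverse_part[OF s e(2,3)]
      by (simp add: \<beta>_def t_def)
    then have "0 < \<beta>"
      using \<open>0 < \<delta>\<close> by (smt (verit) divide_pos_pos)
    have "x - (1 / \<beta>) *\<^sub>R e \<in> Ein_space s"
      using Ein_space_diff_isotropic[OF s x e(1-3)] .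
    moreover have "c \<bullet> (x - (1 / \<beta>) *\<^sub>R e) = 0"
      using c(2) \<open>0 < \<beta>\<close> by (simp add: inner_diff_right \<beta>_def[symmetric])
    moreover have "pangle (1 *\<^sub>R x + (- 1 / \<beta>) *\<^sub>R e) x < \<epsilon>"
    proof (rule \<delta>)
      have "norm ((- 1 / \<beta>) *\<^sub>R e) \<le> 2 / \<beta>"
        using e(4) \<open>0 < \<beta>\<close> by (simp add: divide_right_mono)
      also have "\<dots> < \<delta>"
        using \<open>2 / \<delta> < \<beta>\<close> \<open>0 < \<delta>\<close> \<open>0 < \<beta>\<close> by (simp add: field_simps)
      finally show "norm ((- 1 / \<beta>) *\<^sub>R e) \<le> \<delta> * \<bar>1\<bar>"
        by simp
    qed (use x(2) \<open>0 < \<delta>\<close> in \<open>simp_all add: dot_square_norm\<close>)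
    then have "pangle (x - (1 / \<beta>) *\<^sub>R e) x < \<epsilon>"
      by simp
    ultimately show ?thesis
      by blast
  qed
  then show ?thesis
    by blast
qed

lemma O_lifts_transpose_left:
  assumes g: "g \<in> O_lifts s" and s: "sign_vector s"
  shows "diag_mult s (transpose g *v diag_mult s (g *v v)) = v"
proof -
  have "diag_mult s (transpose g *v diag_mult s (g *v v)) \<bullet> w = v \<bullet> w" for w
  proof -
    have "diag_mult s (transpose g *v diag_mult s (g *v v)) \<bullet> w
        = signform s (g *v v) (g *v diag_mult s w)"
      by (simp only: inner_diag_mult_left inner_transpose_mult signform_eq_inner)
    also have "\<dots> = signform s v (diag_mult s w)"
      using g by (simp add: O_lifts_def)
    also have "\<dots> = v \<bullet> w"
      using s by (simp add: signform_eq_inner diag_mult_diag_mult)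
    finally show ?thesis .
  qed
  then show ?thesis
    by (metis vector_eq_rdot)
qed

lemma O_lifts_transpose_right:
  assumes g: "g \<in> O_lifts s" and s: "sign_vector s"
  shows "g *v diag_mult s (transpose g *v diag_mult s w) = w"
proof -
  have "invertible g"
    using g by (simp add: O_lifts_def)
  then obtain B where "g ** B = mat 1"
    using invertible_right_inverse by blast
  then have "w = g *v (B *v w)"
    by (simp add: matrix_vector_mul_assoc)
  then show ?thesis
    using O_lifts_transpose_left[OF g s, of "B *v w"] by simp
qed

lemma O_lifts_mult_diag_dual_covec:
  assumes g: "g \<in> O_lifts s" and s: "sign_vector s"
  shows "g *v diag_mult s (dual_covec g x) = (1 / stretch g x) *\<^sub>R diag_mult s (image_dir g x)"
  using O_lifts_transpose_right[OF g s, of "diag_mult s (image_dir g x)"] s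
  by (simp add: dual_covec_def linear_scale[OF linear_diag_mult] matrix_vector_mult_scaleR
      diag_mult_diag_mult)

lemma signform_scaleR: "signform s (a *\<^sub>R u) (b *\<^sub>R v) = a * b * signform s u v"
  by (simp add: signform_eq_inner linear_scale[OF linear_diag_mult])

lemma O_image_dir_isotropic:
  assumes "g \<in> O_lifts s" and "x \<in> Ein_space s"
  shows "signform s (image_dir g x) (image_dir g x) = 0"
  using assms by (simp add: image_dir_def signform_scaleR O_lifts_def Ein_space_def)

lemma O_dual_covec_isotropic:
  assumes g: "g \<in> O_lifts s" and s: "sign_vector s" and x: "x \<in> Ein_space s"
  shows "signform s (dual_covec g x) (dual_covec g x) = 0"
proof -
  have "signform s (dual_covec g x) (dual_covec g x)
      = signform s (g *v diag_mult s (dual_covec g x)) (g *v diag_mult s (dual_covec g x))"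
    using g s by (simp add: O_lifts_def signform_diag_mult)
  also have "\<dots> = 0"
    using O_image_dir_isotropic[OF g x] s
    by (simp add: O_lifts_mult_diag_dual_covec[OF g s] signform_scaleR signform_diag_mult)
  finally show ?thesis .
qed

lemma O_resid_diag_dual_covec:
  assumes g: "g \<in> O_lifts s" and s: "sign_vector s" and x: "x \<in> Ein_space s"
  shows "resid g x (diag_mult s (dual_covec g x)) = (1 / (stretch g x)\<^sup>2) *\<^sub>R diag_mult s (image_dir g x)"
  using O_dual_covec_isotropic[OF g s x]
  by (simp add: resid_def O_lifts_mult_diag_dual_covec[OF g s] signform_eq_inner power2_eq_square)

definition tangent_proj :: "('n \<Rightarrow> real) \<Rightarrow> real^'n \<Rightarrow> real^'n \<Rightarrow> real^'n" where
  "tangent_proj s x w = w - (w \<bullet> x) *\<^sub>R x - (w \<bullet> diag_mult s x) *\<^sub>R diag_mult s x"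

lemma linear_tangent_proj: "linear (tangent_proj s x)"
  by (rule linearI) (simp_all add: tangent_proj_def inner_add_left algebra_simps)

lemma tangent_proj_in_Ein_tangent:
  assumes s: "sign_vector s" and x: "x \<in> Ein_space s" "norm x = 1"
  shows "tangent_proj s x w \<in> Ein_tangent s x"
proof -
  have "signform s x v = diag_mult s x \<bullet> v" for v
    by (simp add: signform_eq_inner inner_diag_mult_left)
  then show ?thesis
    using Ein_unit_frame[OF s x]
    by (simp add: Ein_tangent_def tangent_proj_def inner_diff_left inner_diff_right
        inner_commute[of "diag_mult s x" w])
qed

lemma resid_tangent_proj:
  "A *v x \<noteq> 0 \<Longrightarrow> resid A x w
     = (w \<bullet> diag_mult s x) *\<^sub>R resid A x (diag_mult s x) + resid A x (tangent_proj s x w)"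
  by (simp add: tangent_proj_def linear_diff[OF linear_resid] linear_scale[OF linear_resid] resid_self)

lemma signform_expand:
  "signform s (a *\<^sub>R u + v) (a *\<^sub>R u + v) = a\<^sup>2 * signform s u u + 2 * a * signform s u v + signform s v v"
  unfolding signform_def by (simp add: algebra_simps sum.distrib sum_distrib_left power2_eq_square)

text \<open>A vector of B-length 1 keeps B-length 1, while its residual part tends to zero,
  so the stretch at x must blow up.\<close>
lemma O_inverse_stretch_sq_tendsto_zero:
  assumes s: "sign_vector s" and g: "\<And>k. g k \<in> O_lifts s" and x: "x \<in> Ein_space s"
    and nz: "\<And>k. g k *v x \<noteq> 0"
    and f: "signform s f f = 1" "norm f = 1" and Rf: "(\<lambda>k. resid (g k) x f) \<longlonglongrightarrow> 0"
    and C: "\<And>k. norm (dual_covec (g k) x) \<le> C"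
  shows "(\<lambda>k. 1 / (stretch (g k) x)\<^sup>2) \<longlonglongrightarrow> 0"
proof (rule tendsto_sandwich[of "\<lambda>_. 0" _ _ "\<lambda>k. 2 * C * norm (resid (g k) x f) + (norm (resid (g k) x f))\<^sup>2"])
  show "(\<lambda>k. 2 * C * norm (resid (g k) x f) + (norm (resid (g k) x f))\<^sup>2) \<longlonglongrightarrow> 0"
    using tendsto_add[OF tendsto_mult_right_zero tendsto_power[of _ 0 _ 2], OF tendsto_norm_zero[OF Rf]
        tendsto_norm_zero[OF Rf]] by simp
  have "1 / (stretch (g k) x)\<^sup>2 \<le> 2 * C * norm (resid (g k) x f) + (norm (resid (g k) x f))\<^sup>2" for k
  proof -
    define a u \<phi> R where "a = stretch (g k) x" and "u = image_dir (g k) x"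
      and "\<phi> = dual_covec (g k) x \<bullet> f" and "R = resid (g k) x f"
    have "1 = signform s (g k *v f) (g k *v f)"
      using g[of k] f(1) by (simp add: O_lifts_def)
    also have "\<dots> = a\<^sup>2 * (2 * \<phi> * signform s u R + signform s R R)"
      using O_image_dir_isotropic[OF g x, of k]
      by (simp add: matrix_vector_mult_decomp[OF nz, of k f] signform_scaleR signform_expand
          a_def u_def \<phi>_def R_def power2_eq_square)
    finally have "1 / a\<^sup>2 = 2 * \<phi> * signform s u R + signform s R R"
      using stretch_pos[OF nz[of k]] by (simp add: a_def field_simps)
    moreover have "\<bar>\<phi>\<bar> \<le> C"
      using Cauchy_Schwarz_ineq2[of "dual_covec (g k) x" f] C[of k] f(2) by (simp add: \<phi>_def)
    moreover have "\<bar>signform s u R\<bar> \<le> norm R"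
      using abs_signform_le[OF s, of u R] norm_image_dir[OF nz[of k]] by (simp add: u_def)
    ultimately have "\<bar>\<phi> * signform s u R\<bar> \<le> C * norm R"
      unfolding abs_mult by (intro mult_mono) auto
    moreover have "\<bar>signform s R R\<bar> \<le> (norm R)\<^sup>2"
      using abs_signform_le[OF s, of R R] by (simp add: power2_eq_square)
    ultimately show ?thesis
      using \<open>1 / a\<^sup>2 = _\<close> abs_le_D1 unfolding a_def R_def by fastforce
  qed
  then show "eventually (\<lambda>k. 1 / (stretch (g k) x)\<^sup>2 \<le> 2 * C * norm (resid (g k) x f) + (norm (resid (g k) x f))\<^sup>2) sequentially"
    by simp
qed simp_all

lemma Ein_resid_tendsto_zero:
  assumes s: "sign_vector s" and g: "\<And>k. g k \<in> O_lifts s" and x: "x \<in> Ein_space s" "norm x = 1"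
    and nz: "\<And>k. g k *v x \<noteq> 0"
    and tangent: "\<And>v. v \<in> Ein_tangent s x \<Longrightarrow> (\<lambda>k. resid (g k) x v) \<longlonglongrightarrow> 0"
    and conformal: "(\<lambda>k. 1 / (stretch (g k) x)\<^sup>2) \<longlonglongrightarrow> 0"
    and C: "\<And>k. norm (dual_covec (g k) x) \<le> C"
  shows "(\<lambda>k. resid (g k) x w) \<longlonglongrightarrow> 0"
proof -
  define y where "y = diag_mult s x"
  have "linear (\<lambda>v. resid (g k) x (tangent_proj s x v))" for k
    using linear_compose[OF linear_tangent_proj linear_resid] by (simp add: o_def)
  moreover have "(\<lambda>k. resid (g k) x (tangent_proj s x (axis i 1))) \<longlonglongrightarrow> 0" for i
    by (rule tangent[OF tangent_proj_in_Ein_tangent[OF s x]])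
  ultimately obtain \<rho> where "\<rho> \<longlonglongrightarrow> 0" "\<And>k. 0 \<le> \<rho> k"
    and \<rho>: "\<And>k v. norm (resid (g k) x (tangent_proj s x v)) \<le> norm v * \<rho> k"
    by (rule linear_tendsto_zero_uniformly) blast+
  have bound: "norm (resid (g k) x y) \<le> 1 / (stretch (g k) x)\<^sup>2 + (1 + C) * \<rho> k" for k
  proof -
    define v where "v = diag_mult s (dual_covec (g k) x)"
    have "(y - v) \<bullet> y = 0"
      using x(2) s dual_covec_inner_self[OF nz[of k]]
      by (simp add: y_def v_def inner_diff_left inner_diag_mult_diag_mult dot_square_norm norm_diag_mult)
    then have Ryv: "resid (g k) x (y - v) = resid (g k) x (tangent_proj s x (y - v))"
      using resid_tangent_proj[OF nz[of k], of "y - v" s] by (simp add: y_def)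
    have "norm (y - v) \<le> 1 + C"
      using norm_triangle_ineq4[of y v] x(2) s C[of k] by (simp add: y_def v_def norm_diag_mult)
    then have "norm (resid (g k) x (y - v)) \<le> (1 + C) * \<rho> k"
      unfolding Ryv using \<rho>[of k "y - v"] mult_right_mono[OF _ \<open>0 \<le> \<rho> k\<close>] by fastforce
    moreover have "norm (resid (g k) x v) = 1 / (stretch (g k) x)\<^sup>2"
      using O_resid_diag_dual_covec[OF g[of k] s x(1)] norm_image_dir[OF nz[of k]] s
      by (simp add: v_def norm_diag_mult)
    moreover have "resid (g k) x y = resid (g k) x v + resid (g k) x (y - v)"
      by (simp add: linear_diff[OF linear_resid])
    ultimately show ?thesis
      using norm_triangle_ineq[of "resid (g k) x v" "resid (g k) x (y - v)"] by simp
  qed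
  have "(\<lambda>k. norm (resid (g k) x y)) \<longlonglongrightarrow> 0"
  proof (rule tendsto_sandwich[of "\<lambda>_. 0" _ _ "\<lambda>k. 1 / (stretch (g k) x)\<^sup>2 + (1 + C) * \<rho> k"])
    show "(\<lambda>k. 1 / (stretch (g k) x)\<^sup>2 + (1 + C) * \<rho> k) \<longlonglongrightarrow> 0"
      using tendsto_add[OF conformal tendsto_mult_right_zero[OF \<open>\<rho> \<longlonglongrightarrow> 0\<close>]] by simp
    show "eventually (\<lambda>k. norm (resid (g k) x y) \<le> 1 / (stretch (g k) x)\<^sup>2 + (1 + C) * \<rho> k) sequentially"
      using bound by simp
  qed auto
  then have "(\<lambda>k. resid (g k) x y) \<longlonglongrightarrow> 0"
    by (rule tendsto_norm_zero_cancel)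
  moreover have "(\<lambda>k. resid (g k) x (tangent_proj s x w)) \<longlonglongrightarrow> 0"
    by (rule tangent[OF tangent_proj_in_Ein_tangent[OF s x]])
  ultimately have "(\<lambda>k. (w \<bullet> y) *\<^sub>R resid (g k) x y + resid (g k) x (tangent_proj s x w)) \<longlonglongrightarrow> (w \<bullet> y) *\<^sub>R 0 + 0"
    by (intro tendsto_add tendsto_scaleR tendsto_const)
  moreover have "resid (g k) x w = (w \<bullet> y) *\<^sub>R resid (g k) x y + resid (g k) x (tangent_proj s x w)" for k
    unfolding y_def by (rule resid_tangent_proj[OF nz])
  ultimately show ?thesis
    by simp
qed

lemma exists_unit_orth_sign_coords:
  assumes s: "sign_vector s" and "2 \<le> card {i. s i = 1}" and "2 \<le> card {i. s i = -1}"
  obtains fp fm where "norm fp = 1" "coord_proj {i. s i = 1} fp = fp" "fp \<bullet> x = 0"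
    "norm fm = 1" "coord_proj (- {i. s i = 1}) fm = fm" "fm \<bullet> x = 0"
proof -
  have "- {i. s i = 1} = {i. s i = -1}"
    using s by auto
  then show ?thesis
    using exists_unit_orth_in_coords[of "{i. s i = 1}" x] exists_unit_orth_in_coords[of "- {i. s i = 1}" x]
      assms(2,3) that by metis
qed

lemma positive_unit_in_Ein_tangent:
  assumes s: "sign_vector s" and f: "norm f = 1" "coord_proj {i. s i = 1} f = f" "f \<bullet> x = 0"
  shows "f \<in> Ein_tangent s x" "signform s f f = 1"
  using signform_coord_proj[OF s, of x f] signform_coord_proj[OF s, of f f] f
    coord_proj_compl_coord_proj[of "{i. s i = 1}" f]
  by (simp_all add: Ein_tangent_def inner_coord_proj_left dot_square_norm
      linear_0[OF linear_coord_proj] inner_commute[of x f])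

lemma Minkowski_patch_in_halfspace:
  assumes s: "sign_vector s" and x: "x \<in> Ein_space s" and c: "c \<bullet> x = 1" "signform s c c = 0"
  obtains W where "W \<in> Minkowski_patches s" "x \<in> W" "W \<subseteq> {w. c \<bullet> w \<noteq> 0}"
proof
  define v where "v = diag_mult s c"
  have "c \<noteq> 0"
    using c(1) by auto
  then have "v \<noteq> 0"
    using norm_diag_mult[OF s, of c] by (auto simp: v_def)
  with c(2) have "v \<in> Ein_space s"
    using s by (simp add: Ein_space_def v_def signform_diag_mult)
  have vw: "signform s v w = c \<bullet> w" for w
    using s by (simp add: v_def signform_eq_inner inner_diag_mult_diag_mult)
  show "{w \<in> Ein_space s. signform s v w \<noteq> 0} \<in> Minkowski_patches s"
    unfolding Minkowski_patches_def using \<open>v \<in> Ein_space s\<close> by blast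
  show "x \<in> {w \<in> Ein_space s. signform s v w \<noteq> 0}"
    using x c(1) by (simp add: vw)
  show "{w \<in> Ein_space s. signform s v w \<noteq> 0} \<subseteq> {w. c \<bullet> w \<noteq> 0}"
    by (auto simp: vw)
qed

lemma Ein_contraction:
  fixes g :: "nat \<Rightarrow> real^'n^'n"
  assumes s: "sign_vector s" and "2 \<le> card {i. s i = 1}" and "2 \<le> card {i. s i = -1}"
    and g: "\<And>k. g k \<in> O_lifts s" and "\<And>k. 0 < T k" and "filterlim T at_top sequentially"
    and x: "x \<in> Ein_space s" "norm x = 1" and att: "attracts (Ein_space s) g x"
    and rate: "\<And>v. v \<in> Ein_tangent s x \<Longrightarrow> v \<noteq> 0 \<Longrightarrow> (\<lambda>k. ln (dnorm (g k) x v) / T k) \<longlonglongrightarrow> -1"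
  shows "\<exists>r. strict_mono r \<and> (\<exists>W\<in>Minkowski_patches s. x \<in> W \<and> contracts_on (\<lambda>k. g (r k)) W x)"
proof -
  obtain fp fm where fp: "norm fp = 1" "coord_proj {i. s i = 1} fp = fp" "fp \<bullet> x = 0"
    and fm: "norm fm = 1" "coord_proj (- {i. s i = 1}) fm = fm" "fm \<bullet> x = 0"
    using exists_unit_orth_sign_coords[OF s assms(2,3)] by metis
  have "x \<noteq> 0"
    using x(2) by auto
  then have nz: "g k *v x \<noteq> 0" for k
    using g[of k] by (simp add: O_lifts_def invertible_mult_vec_nonzero)
  have tangent: "(\<lambda>k. resid (g k) x v) \<longlonglongrightarrow> 0" if "v \<in> Ein_tangent s x" for v
    using rate[OF that] by (rule resid_tendsto_zero[OF nz assms(5,6)])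
  have "bounded (range (\<lambda>k. dual_covec (g k) x))"
  proof (rule dual_covec_bounded[OF att x nz, of "\<lambda>c. signform s c c = 0"])
    show "signform s (dual_covec (g k) x) (dual_covec (g k) x) = 0" for k
      by (rule O_dual_covec_isotropic[OF g s x(1)])
    show "\<exists>M. \<forall>c. signform s c c = 0 \<and> c \<bullet> x = 1 \<and> M < norm c
            \<longrightarrow> (\<exists>y\<in>Ein_space s. c \<bullet> y = 0 \<and> pangle y x < \<epsilon>)" if "0 < \<epsilon>" for \<epsilon>
      using Ein_orth_point_near[OF s x fp fm that] .
  qed
  then obtain C where C: "\<And>k. norm (dual_covec (g k) x) \<le> C"
    by (auto simp: bounded_iff)
  have "(\<lambda>k. 1 / (stretch (g k) x)\<^sup>2) \<longlonglongrightarrow> 0"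
    using positive_unit_in_Ein_tangent[OF s fp]
    by (intro O_inverse_stretch_sq_tendsto_zero[OF s g x(1) nz _ fp(1) tangent C])
  then have "(\<lambda>k. resid (g k) x w) \<longlonglongrightarrow> 0" for w
    using Ein_resid_tendsto_zero[OF s g x nz tangent _ C] by blast
  then obtain r c0 where "strict_mono r" and c: "(\<lambda>k. dual_covec (g (r k)) x) \<longlonglongrightarrow> c0"
    and "c0 \<bullet> x = 1" and contr: "contracts_on (\<lambda>k. g (r k)) {w. c0 \<bullet> w \<noteq> 0} x"
    using contracting_subsequence[OF att x nz] \<open>bounded _\<close> by blast
  have "(\<lambda>k. signform s (dual_covec (g (r k)) x) (dual_covec (g (r k)) x)) \<longlonglongrightarrow> signform s c0 c0"
    unfolding signform_def by (intro tendsto_intros c)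
  then have "(\<lambda>k. 0) \<longlonglongrightarrow> signform s c0 c0"
    using O_dual_covec_isotropic[OF g s x(1)] by simp
  then have "signform s c0 c0 = 0"
    by (rule LIMSEQ_unique[OF tendsto_const, symmetric])
  then obtain W where "W \<in> Minkowski_patches s" "x \<in> W" "W \<subseteq> {w. c0 \<bullet> w \<noteq> 0}"
    using Minkowski_patch_in_halfspace[OF s x(1) \<open>c0 \<bullet> x = 1\<close>] by metis
  then show ?thesis
    using \<open>strict_mono r\<close> contracts_on_subset[OF contr] by blast
qed

theorem lemma4p5:
  fixes X :: "(real^'n) set" and G :: "(real^'n^'n) set"
    and Tan :: "(real^'n) set" and Wfam :: "(real^'n) set set"
    and g :: "nat \<Rightarrow> real^'n^'n" and T :: "nat \<Rightarrow> real" and x :: "real^'n"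
  assumes model:
    "(CARD('n) \<ge> 3 \<and> X = RP_space \<and> G = PGL_lifts \<and> Tan = RP_tangent x
        \<and> Wfam = affine_charts)
     \<or> (\<exists>s p q. (p::nat) \<ge> 2 \<and> (q::nat) \<ge> 2 \<and> (\<forall>i. s i = 1 \<or> s i = -1)
        \<and> card {i. s i = 1} = p + 1 \<and> card {i. s i = -1} = q + 1
        \<and> X = Ein_space s \<and> G = O_lifts s \<and> Tan = Ein_tangent s x
        \<and> Wfam = Minkowski_patches s)"
    and gG: "\<forall>k. g k \<in> G"
    and Tpos: "\<forall>k. T k > 0"
    and Tlim: "filterlim T at_top sequentially"
    and xX: "x \<in> X" and xunit: "norm x = 1"
    and cond1: "\<forall>xs. (\<forall>k. xs k \<in> X) \<and> (\<lambda>k. pangle (xs k) x) \<longlonglongrightarrow> 0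
                   \<longrightarrow> (\<lambda>k. pangle (g k *v xs k) x) \<longlonglongrightarrow> 0"
    and cond2: "\<forall>v\<in>Tan. v \<noteq> 0 \<longrightarrow>
                   (\<lambda>k. ln (dnorm (g k) x v) / T k) \<longlonglongrightarrow> -1"
  shows "\<exists>r. strict_mono r \<and>
           (\<exists>W\<in>Wfam. x \<in> W \<and>
              (\<forall>K. compact K \<and> K \<subseteq> W \<longrightarrow>
                 (\<forall>\<epsilon>>0. eventually (\<lambda>k. \<forall>y\<in>K. pangle (g (r k) *v y) x < \<epsilon>)
                          sequentially)))"
proof -
  have att: "attracts X g x"
    using cond1 by (simp add: attracts_def)
  have "\<exists>r. strict_mono r \<and> (\<exists>W\<in>Wfam. x \<in> W \<and> contracts_on (\<lambda>k. g (r k)) W x)"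
    using model
  proof (elim disjE exE conjE)
    assume "X = RP_space" "G = PGL_lifts" "Tan = RP_tangent x" "Wfam = affine_charts"
    then show ?thesis
      using RP_contraction[of g T x] gG Tpos Tlim xunit att cond2 by simp
  next
    fix s p q
    assume "2 \<le> p" "2 \<le> q" "\<forall>i. s i = 1 \<or> s i = -1"
      "card {i. s i = 1} = p + 1" "card {i. s i = -1} = q + 1"
      "X = Ein_space s" "G = O_lifts s" "Tan = Ein_tangent s x" "Wfam = Minkowski_patches s"
    then show ?thesis
      using Ein_contraction[of s g T x] gG Tpos Tlim xX xunit att cond2 by simp
  qed
  then show ?thesis
    by (simp add: contracts_on_def)
qed

end
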